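(* Let $\gamma$ be an ordinal of $\mathrm{OT}$ and $A$ an $\mathcal L_{\mathrm R}^{<\gamma}$-sentence with $\mathsf{RR}^{+}_{<\gamma}\vdash A$. Then $\langle{\perp\!\!\!\perp},<\gamma\rangle\models A$ for every pole $\perp\!\!\!\perp$.
   Context: Arithmetic: $\mathcal{L}$ is the language of $\mathsf{PA}$ ($\to,\forall,=$, constant $0$, function symbols for all primitive recursive functions); $\langle x,y\rangle$ primitive recursive pairing with projections $(\cdot)_0,(\cdot)_1$; $x\cdot y\simeq z$ is $\exists w(\mathrm T_1(x,y,w)\wedge(w)_0=z)$ (Kleene T-predicate): the $x$-th partial recursive function on $y$ halts with output $z$; $\mathrm{Eq}(y,z)$: $y,z$ code closed $\mathcal L$-terms of equal value. Fixed Gödel numbering; $\ulcorner A(\dot x)\urcorner$ codes $A$ with the numeral of $x$ substituted. $\mathrm{OT}$ is a standard primitive recursive notation system for predicative ordinals; $\alpha,\beta,\gamma,\delta$ range over notations. $\mathcal L_{\mathrm R}^{<\gamma}$ is $\mathcal L$ plus unary $x\in{\perp\!\!\!\perp}$ and binary $x\,F_\beta\,y$, $x\,T_\beta\,y$ for $\beta<\gamma$; $\mathcal L_{\perp\!\!\!\perp}=\mathcal L\cup\{\in{\perp\!\!\!\perp}\}$; $\mathrm{Sent}^{<\beta}_{\mathrm R}(x)$: "$x$ codes an $\mathcal L_{\mathrm R}^{<\beta}$-sentence". Explicit refutation/realisation formulas, by recursion on $A$: $s\in\|P\|:=P\to s\in{\perp\!\!\!\perp}$ ($P$ atomic of $\mathcal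 L_{\perp\!\!\!\perp}$); $s\in\|t\,F_\beta\,u\|:=s\,F_\beta\,(t\,\dot\in\|u\|)$; $s\in\|t\,T_\beta\,u\|:=s\,F_\beta\,(t\,\dot\in|u|)$; $s\in\|A\to B\|:=(s)_0\in|A|\wedge(s)_1\in\|B\|$; $s\in\|\forall xA(x)\|:=(s)_1\in\|A((s)_0)\|$; $s\in|A|:=\forall a(a\in\|A\|\to\langle s,a\rangle\in{\perp\!\!\!\perp})$; $x\,\dot\in\|y\|$, $x\,\dot\in|y|$ are primitive recursive function symbols with $\mathsf{PA}\vdash x\,\dot\in\|\ulcorner A\urcorner\|=\ulcorner\dot x\in\|A\|\urcorner$, $x\,\dot\in|\ulcorner A\urcorner|=\ulcorner\dot x\in|A|\urcorner$ for sentences $A$, with non-sentence output when $y$ is not a sentence code. $\ulcorner\dot b\,F_\alpha\ulcorner A\urcorner\urcorner$ denotes the code of $\bar b\,F_\alpha\,\overline{\ulcorner A\urcorner}$ and $\ulcorner\dot b\in\|A\|\urcorner$ denotes $b\,\dot\in\|\ulcorner A\urcorner\|$ (similarly for $T_\alpha$, $|\cdot|$). $\mathsf{RR}_{<\gamma}$ is $\mathsf{PA}$ in $\mathcal L_{\mathrm R}^{<\gamma}$ plus, for all $\alpha<\beta<\gamma$: (RR1) $\mathrm T_1(a,b,c)\to((c)_0\in{\perp\!\!\!\perp}\to\langle a,b\rangle\in{\perp\!\!\!\perp})$; (RR2) $\forall\ulcorner A\urcorner\in\mathrm{Sent}^{<\beta}_{\mathrm R}.\ a\,T_\beta\ulcorner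 A\urcorner\leftrightarrow\forall b(b\,F_\beta\ulcorner A\urcorner\to\langle a,b\rangle\in{\perp\!\!\!\perp})$; (RR3) $\forall\ulcorner s\urcorner,\ulcorner t\urcorner\forall\ulcorner A_x\urcorner\in\mathrm{Sent}^{<\beta}_{\mathrm R}.\ \mathrm{Eq}(\ulcorner s\urcorner,\ulcorner t\urcorner)\to(a\,F_\beta\ulcorner A(s)\urcorner\to a\,F_\beta\ulcorner A(t)\urcorner)$; (RR4) $a\,F_\beta\ulcorner P(\dot{\vec x})\urcorner\leftrightarrow(P(\vec x)\to a\in{\perp\!\!\!\perp})$ for atomic $P$ of $\mathcal L_{\perp\!\!\!\perp}$; (RR5) $\forall\ulcorner A\urcorner,\ulcorner B\urcorner\in\mathrm{Sent}^{<\beta}_{\mathrm R}.\ a\,F_\beta\ulcorner A\to B\urcorner\leftrightarrow((a)_0\,T_\beta\ulcorner A\urcorner\wedge(a)_1\,F_\beta\ulcorner B\urcorner)$; (RR6) $\forall\ulcorner A_x\urcorner\in\mathrm{Sent}^{<\beta}_{\mathrm R}.\ a\,F_\beta\ulcorner\forall xA\urcorner\leftrightarrow(a)_1\,F_\beta\ulcorner A((\dot a)_0)\urcorner$; (RR7) $\forall\ulcorner A\urcorner\in\mathrm{Sent}^{<\alpha}_{\mathrm R}.\ a\,F_\beta\ulcorner\dot b\,F_\alpha\ulcorner A\urcorner\urcorner\leftrightarrow a\in\|b\,F_\alpha\ulcorner A\urcorner\|$; (RR8) same with $T_\alpha$; (RR9) $\forall\delta<\beta\,\forall\ulcorner A\urcorner\in\mathrm{Sent}^{<\delta}_{\mathrm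 R}.\ a\,F_\beta\ulcorner\dot b\,F_\delta\ulcorner A\urcorner\urcorner\leftrightarrow a\,F_\beta\ulcorner\dot b\in\|A\|\urcorner$; (RR10) $\forall\delta<\beta\,\forall\ulcorner A\urcorner\in\mathrm{Sent}^{<\delta}_{\mathrm R}.\ a\,F_\beta\ulcorner\dot b\,T_\delta\ulcorner A\urcorner\urcorner\leftrightarrow a\,F_\beta\ulcorner\dot b\in|A|\urcorner$. $\mathsf{RR}^{+}_{<\gamma}$ adds the rule: from $t\,T_\beta\ulcorner A\urcorner$ infer $A$ ($t$ closed term, $A$ an $\mathcal L$-sentence, $\beta<\gamma$). Models: a pole is $\perp\!\!\!\perp\subseteq\mathbb N$ with ($e\cdot m\simeq n$ and $n\in\perp\!\!\!\perp$) $\Rightarrow\langle e,m\rangle\in\perp\!\!\!\perp$. For $\mathcal L_{\mathrm R}^{<\gamma}$-sentences define $\|A\|^{<\gamma}_{\perp\!\!\!\perp}$ inductively: $n\in\|s=t\|$ iff ($s=t$ true in $\mathbb N$ implies $n\in\perp\!\!\!\perp$); $n\in\|m\in{\perp\!\!\!\perp}\|$ iff ($m\in\perp\!\!\!\perp$ implies $n\in\perp\!\!\!\perp$); $n\in\|m\,F_\beta\,l\|$ iff $l=\ulcorner A\urcorner$ for some $\mathcal L_{\mathrm R}^{<\beta}$-sentence $A$ and $n\in\|\bar m\in\|A\|\|$; $n\in\|m\,T_\beta\,l\|$ iff $l=\ulcorner A\urcorner$ for some $\mathcal L_{\mathrm R}^{<\beta}$-sentence $A$ and $n\in\|\bar m\in|A|\|$;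 $\|A\to B\|$, $\|\forall xA\|$ as in the explicit clauses; $|A|^{<\gamma}_{\perp\!\!\!\perp}=\{n:\forall m\in\|A\|\ \langle n,m\rangle\in\perp\!\!\!\perp\}$. Let $\mathbb F^\beta=\{(n,\ulcorner A\urcorner):A\in\mathrm{Sent}^{<\beta}_{\mathrm R},n\in\|A\|^{<\gamma}_{\perp\!\!\!\perp}\}$, $\mathbb T^\beta=\{(n,\ulcorner A\urcorner):A\in\mathrm{Sent}^{<\beta}_{\mathrm R},n\in|A|^{<\gamma}_{\perp\!\!\!\perp}\}$. $\langle{\perp\!\!\!\perp},<\gamma\rangle$ denotes the $\mathcal L_{\mathrm R}^{<\gamma}$-structure $\langle\mathbb N,\perp\!\!\!\perp,(\mathbb F^\beta)_{\beta<\gamma},(\mathbb T^\beta)_{\beta<\gamma}\rangle$. *)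

theory Defs
  imports Main "HOL-Library.Nat_Bijection"
begin

section \<open>Primitive recursive function symbols (codes with explicit arities)\<close>

datatype pfn =
    PZ nat
  | PS
  | PProj nat nat
  | PComp nat pfn "pfn list"
  | PRec nat pfn pfn

definition hd0 :: "nat list \<Rightarrow> nat" where
  "hd0 xs = (case xs of [] \<Rightarrow> 0 | x # _ \<Rightarrow> x)"

definition nth0 :: "nat list \<Rightarrow> nat \<Rightarrow> nat" where
  "nth0 xs i = (if i < length xs then xs ! i else 0)"

primrec evalpr :: "pfn \<Rightarrow> nat list \<Rightarrow> nat" where
  "evalpr (PZ n) xs = 0"
| "evalpr PS xs = Suc (hd0 xs)"
| "evalpr (PProj n i) xs = nth0 xs i"
| "evalpr (PComp m f gs) xs = evalpr f (map (\<lambda>g. evalpr g xs) gs)"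
| "evalpr (PRec n f g) xs =
     rec_nat (evalpr f (tl xs)) (\<lambda>k r. evalpr g (k # r # tl xs)) (hd0 xs)"

primrec arity :: "pfn \<Rightarrow> nat" where
  "arity (PZ n) = n"
| "arity PS = 1"
| "arity (PProj n i) = n"
| "arity (PComp m f gs) = m"
| "arity (PRec n f g) = Suc n"

fun wfpr :: "pfn \<Rightarrow> bool" where
  "wfpr (PZ n) = True"
| "wfpr PS = True"
| "wfpr (PProj n i) = (i < n)"
| "wfpr (PComp m f gs) =
     (wfpr f \<and> arity f = length gs \<and> (\<forall>g\<in>set gs. wfpr g \<and> arity g = m))"
| "wfpr (PRec n f g) = (wfpr f \<and> arity f = n \<and> wfpr g \<and> arity g = Suc (Suc n))"

definition wfc :: "pfn \<Rightarrow> nat \<Rightarrow> bool" where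
  "wfc c n \<longleftrightarrow> wfpr c \<and> arity c = n"

section \<open>Syntax of L_R (de Bruijn indices for variables)\<close>

datatype tm = Var nat | Zero | App pfn "tm list"

datatype fm =
    FEq tm tm
  | Mem tm
  | Fp nat tm tm
  | Tp nat tm tm
  | Imp fm fm
  | All fm

abbreviation Sc :: "tm \<Rightarrow> tm" where "Sc t \<equiv> App PS [t]"

primrec num :: "nat \<Rightarrow> tm" where
  "num 0 = Zero"
| "num (Suc n) = Sc (num n)"

definition Fls :: fm where "Fls = FEq Zero (Sc Zero)"
definition Neg :: "fm \<Rightarrow> fm" where "Neg A = Imp A Fls"
definition And :: "fm \<Rightarrow> fm \<Rightarrow> fm" where "And A B = Neg (Imp A (Neg B))"
definition Iff :: "fm \<Rightarrow> fm \<Rightarrow> fm" where "Iff A B = And (Imp A B) (Imp B A)"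

primrec tsub :: "(nat \<Rightarrow> tm) \<Rightarrow> tm \<Rightarrow> tm" where
  "tsub \<sigma> (Var i) = \<sigma> i"
| "tsub \<sigma> Zero = Zero"
| "tsub \<sigma> (App f ts) = App f (map (tsub \<sigma>) ts)"

definition liftt :: "tm \<Rightarrow> tm" where "liftt t = tsub (\<lambda>j. Var (Suc j)) t"

definition scons :: "tm \<Rightarrow> (nat \<Rightarrow> tm) \<Rightarrow> nat \<Rightarrow> tm" where
  "scons u \<sigma> j = (case j of 0 \<Rightarrow> u | Suc k \<Rightarrow> \<sigma> k)"

definition up :: "(nat \<Rightarrow> tm) \<Rightarrow> nat \<Rightarrow> tm" where
  "up \<sigma> = scons (Var 0) (liftt \<circ> \<sigma>)"

primrec fsub :: "(nat \<Rightarrow> tm) \<Rightarrow> fm \<Rightarrow> fm" where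
  "fsub \<sigma> (FEq s t) = FEq (tsub \<sigma> s) (tsub \<sigma> t)"
| "fsub \<sigma> (Mem t) = Mem (tsub \<sigma> t)"
| "fsub \<sigma> (Fp b s t) = Fp b (tsub \<sigma> s) (tsub \<sigma> t)"
| "fsub \<sigma> (Tp b s t) = Tp b (tsub \<sigma> s) (tsub \<sigma> t)"
| "fsub \<sigma> (Imp A B) = Imp (fsub \<sigma> A) (fsub \<sigma> B)"
| "fsub \<sigma> (All A) = All (fsub (up \<sigma>) A)"

text \<open>Instantiate variable 0 by u (other free variables are shifted down by one).\<close>
definition subst0 :: "tm \<Rightarrow> fm \<Rightarrow> fm" where "subst0 u A = fsub (scons u Var) A"

definition liftf :: "fm \<Rightarrow> fm" where "liftf A = fsub (\<lambda>j. Var (Suc j)) A"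

fun clt :: "nat \<Rightarrow> tm \<Rightarrow> bool" where
  "clt k (Var i) = (i < k)"
| "clt k Zero = True"
| "clt k (App f ts) = (\<forall>t\<in>set ts. clt k t)"

primrec clf :: "nat \<Rightarrow> fm \<Rightarrow> bool" where
  "clf k (FEq s t) = (clt k s \<and> clt k t)"
| "clf k (Mem t) = clt k t"
| "clf k (Fp b s t) = (clt k s \<and> clt k t)"
| "clf k (Tp b s t) = (clt k s \<and> clt k t)"
| "clf k (Imp A B) = (clf k A \<and> clf k B)"
| "clf k (All A) = clf (Suc k) A"

fun wft :: "tm \<Rightarrow> bool" where
  "wft (Var i) = True"
| "wft Zero = True"
| "wft (App f ts) = (wfpr f \<and> arity f = length ts \<and> (\<forall>t\<in>set ts. wft t))"

primrec wffs :: "fm \<Rightarrow> bool" where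
  "wffs (FEq s t) = (wft s \<and> wft t)"
| "wffs (Mem t) = wft t"
| "wffs (Fp b s t) = (wft s \<and> wft t)"
| "wffs (Tp b s t) = (wft s \<and> wft t)"
| "wffs (Imp A B) = (wffs A \<and> wffs B)"
| "wffs (All A) = wffs A"

primrec idx :: "fm \<Rightarrow> nat set" where
  "idx (FEq s t) = {}"
| "idx (Mem t) = {}"
| "idx (Fp b s t) = {b}"
| "idx (Tp b s t) = {b}"
| "idx (Imp A B) = idx A \<union> idx B"
| "idx (All A) = idx A"

primrec pureL :: "fm \<Rightarrow> bool" where
  "pureL (FEq s t) = True"
| "pureL (Mem t) = False"
| "pureL (Fp b s t) = False"
| "pureL (Tp b s t) = False"
| "pureL (Imp A B) = (pureL A \<and> pureL B)"
| "pureL (All A) = pureL A"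

text \<open>A formula of L_R^{<g} (w.r.t. the notation ordering lt).\<close>
definition inL :: "(nat \<Rightarrow> nat \<Rightarrow> bool) \<Rightarrow> nat \<Rightarrow> fm \<Rightarrow> bool" where
  "inL lt g A \<longleftrightarrow> wffs A \<and> (\<forall>d\<in>idx A. lt d g)"

definition sentlt :: "(nat \<Rightarrow> nat \<Rightarrow> bool) \<Rightarrow> nat \<Rightarrow> fm \<Rightarrow> bool" where
  "sentlt lt g A \<longleftrightarrow> inL lt g A \<and> clf 0 A"

definition sentR :: "fm \<Rightarrow> bool" where
  "sentR A \<longleftrightarrow> wffs A \<and> clf 0 A"

definition sentL :: "fm \<Rightarrow> bool" where
  "sentL A \<longleftrightarrow> wffs A \<and> clf 0 A \<and> pureL A"

section \<open>Goedel numbering\<close>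

primrec lcode :: "nat list \<Rightarrow> nat" where
  "lcode [] = 0"
| "lcode (x # xs) = Suc (prod_encode (x, lcode xs))"

primrec pcode :: "pfn \<Rightarrow> nat" where
  "pcode (PZ n) = prod_encode (0, n)"
| "pcode PS = prod_encode (1, 0)"
| "pcode (PProj n i) = prod_encode (2, prod_encode (n, i))"
| "pcode (PComp m f gs) =
     prod_encode (3, prod_encode (m, prod_encode (pcode f, lcode (map pcode gs))))"
| "pcode (PRec n f g) = prod_encode (4, prod_encode (n, prod_encode (pcode f, pcode g)))"

primrec tcode :: "tm \<Rightarrow> nat" where
  "tcode (Var i) = prod_encode (0, i)"
| "tcode Zero = prod_encode (1, 0)"
| "tcode (App f ts) = prod_encode (2, prod_encode (pcode f, lcode (map tcode ts)))"

primrec fcode :: "fm \<Rightarrow> nat" where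
  "fcode (FEq s t) = prod_encode (0, prod_encode (tcode s, tcode t))"
| "fcode (Mem t) = prod_encode (1, tcode t)"
| "fcode (Fp b s t) = prod_encode (2, prod_encode (b, prod_encode (tcode s, tcode t)))"
| "fcode (Tp b s t) = prod_encode (3, prod_encode (b, prod_encode (tcode s, tcode t)))"
| "fcode (Imp A B) = prod_encode (4, prod_encode (fcode A, fcode B))"
| "fcode (All A) = prod_encode (5, fcode A)"

definition pr :: "nat \<Rightarrow> nat \<Rightarrow> nat" where "pr x y = prod_encode (x, y)"
definition pj0 :: "nat \<Rightarrow> nat" where "pj0 n = fst (prod_decode n)"
definition pj1 :: "nat \<Rightarrow> nat" where "pj1 n = snd (prod_decode n)"

section \<open>The distinguished primitive recursive symbols\<close>

record rsyms =
  cPair :: pfn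
  cP0 :: pfn
  cP1 :: pfn
  cT1 :: pfn
  cSent :: pfn
  cSent1 :: pfn
  cLt :: pfn
  cImp :: pfn
  cAll :: pfn
  cInst :: pfn
  cSubst :: pfn
  cMkF :: pfn
  cMkT :: pfn
  cRef :: pfn
  cReal :: pfn
  eqF :: fm

definition pairT :: "rsyms \<Rightarrow> tm \<Rightarrow> tm \<Rightarrow> tm" where "pairT S a b = App (cPair S) [a, b]"
definition p0T :: "rsyms \<Rightarrow> tm \<Rightarrow> tm" where "p0T S a = App (cP0 S) [a]"
definition p1T :: "rsyms \<Rightarrow> tm \<Rightarrow> tm" where "p1T S a = App (cP1 S) [a]"

text \<open>refF S \<sigma> s A is the formula  s \<in> ||A\<sigma>||  (A with the simultaneous substitution \<sigma>
  applied to its free variables); realF S \<sigma> s A is  s \<in> |A\<sigma>|.  The substitution argument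
  only serves to make the recursion structural; refF S Var s A is s \<in> ||A||.\<close>

primrec refF :: "rsyms \<Rightarrow> (nat \<Rightarrow> tm) \<Rightarrow> tm \<Rightarrow> fm \<Rightarrow> fm" where
  "refF S \<sigma> s (FEq u v) = Imp (FEq (tsub \<sigma> u) (tsub \<sigma> v)) (Mem s)"
| "refF S \<sigma> s (Mem u) = Imp (Mem (tsub \<sigma> u)) (Mem s)"
| "refF S \<sigma> s (Fp b u v) = Fp b s (App (cRef S) [tsub \<sigma> u, tsub \<sigma> v])"
| "refF S \<sigma> s (Tp b u v) = Fp b s (App (cReal S) [tsub \<sigma> u, tsub \<sigma> v])"
| "refF S \<sigma> s (Imp A B) =
     And (All (Imp (refF S (liftt \<circ> \<sigma>) (Var 0) A) (Mem (pairT S (liftt (p0T S s)) (Var 0)))))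
         (refF S \<sigma> (p1T S s) B)"
| "refF S \<sigma> s (All A) = refF S (scons (p0T S s) \<sigma>) (p1T S s) A"

definition realF :: "rsyms \<Rightarrow> (nat \<Rightarrow> tm) \<Rightarrow> tm \<Rightarrow> fm \<Rightarrow> fm" where
  "realF S \<sigma> s A = All (Imp (refF S (liftt \<circ> \<sigma>) (Var 0) A) (Mem (pairT S (liftt s) (Var 0))))"

section \<open>Standard semantics\<close>

primrec evt :: "(nat \<Rightarrow> nat) \<Rightarrow> tm \<Rightarrow> nat" where
  "evt e (Var i) = e i"
| "evt e Zero = 0"
| "evt e (App f ts) = evalpr f (map (evt e) ts)"

definition econs :: "nat \<Rightarrow> (nat \<Rightarrow> nat) \<Rightarrow> nat \<Rightarrow> nat" where
  "econs n e j = (case j of 0 \<Rightarrow> n | Suc k \<Rightarrow> e k)"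

primrec holds :: "nat set \<Rightarrow> (nat \<Rightarrow> (nat \<times> nat) set) \<Rightarrow> (nat \<Rightarrow> (nat \<times> nat) set)
                    \<Rightarrow> (nat \<Rightarrow> nat) \<Rightarrow> fm \<Rightarrow> bool" where
  "holds P Fr Tr e (FEq s t) = (evt e s = evt e t)"
| "holds P Fr Tr e (Mem t) = (evt e t \<in> P)"
| "holds P Fr Tr e (Fp b s t) = ((evt e s, evt e t) \<in> Fr b)"
| "holds P Fr Tr e (Tp b s t) = ((evt e s, evt e t) \<in> Tr b)"
| "holds P Fr Tr e (Imp A B) = (holds P Fr Tr e A \<longrightarrow> holds P Fr Tr e B)"
| "holds P Fr Tr e (All A) = (\<forall>n. holds P Fr Tr (econs n e) A)"

definition cv :: "tm \<Rightarrow> nat" where "cv t = evt (\<lambda>_. 0) t"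

definition eq_rel :: "nat \<Rightarrow> nat \<Rightarrow> bool" where
  "eq_rel y z \<longleftrightarrow> (\<exists>s t. wft s \<and> wft t \<and> clt 0 s \<and> clt 0 t \<and>
                         y = tcode s \<and> z = tcode t \<and> cv s = cv t)"

section \<open>Specification of the distinguished symbols\<close>

definition good_syms :: "(nat \<Rightarrow> nat \<Rightarrow> bool) \<Rightarrow> (nat \<Rightarrow> nat \<Rightarrow> nat \<Rightarrow> bool) \<Rightarrow> rsyms \<Rightarrow> bool" where
  "good_syms lt kT S \<longleftrightarrow>
     wfc (cPair S) 2 \<and> (\<forall>x y. evalpr (cPair S) [x, y] = pr x y) \<and>
     wfc (cP0 S) 1 \<and> (\<forall>x. evalpr (cP0 S) [x] = pj0 x) \<and>
     wfc (cP1 S) 1 \<and> (\<forall>x. evalpr (cP1 S) [x] = pj1 x) \<and>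
     wfc (cT1 S) 3 \<and> (\<forall>a b c. evalpr (cT1 S) [a, b, c] = (if kT a b c then 1 else 0)) \<and>
     wfc (cSent S) 2 \<and>
       (\<forall>b x. evalpr (cSent S) [b, x] = (if \<exists>A. sentlt lt b A \<and> x = fcode A then 1 else 0)) \<and>
     wfc (cSent1 S) 2 \<and>
       (\<forall>b x. evalpr (cSent1 S) [b, x] =
                (if \<exists>A. inL lt b A \<and> clf 1 A \<and> x = fcode A then 1 else 0)) \<and>
     wfc (cLt S) 2 \<and> (\<forall>x y. evalpr (cLt S) [x, y] = (if lt x y then 1 else 0)) \<and>
     wfc (cImp S) 2 \<and> (\<forall>A B. evalpr (cImp S) [fcode A, fcode B] = fcode (Imp A B)) \<and>
     wfc (cAll S) 1 \<and> (\<forall>A. evalpr (cAll S) [fcode A] = fcode (All A)) \<and>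
     wfc (cInst S) 2 \<and> (\<forall>A n. evalpr (cInst S) [fcode A, n] = fcode (subst0 (num n) A)) \<and>
     wfc (cSubst S) 2 \<and> (\<forall>A t. evalpr (cSubst S) [fcode A, tcode t] = fcode (subst0 t A)) \<and>
     wfc (cMkF S) 3 \<and> (\<forall>a b x. evalpr (cMkF S) [a, b, x] = fcode (Fp a (num b) (num x))) \<and>
     wfc (cMkT S) 3 \<and> (\<forall>a b x. evalpr (cMkT S) [a, b, x] = fcode (Tp a (num b) (num x))) \<and>
     wfc (cRef S) 2 \<and>
       (\<forall>b A. sentR A \<longrightarrow> evalpr (cRef S) [b, fcode A] = fcode (refF S Var (num b) A)) \<and>
       (\<forall>b y. \<not> (\<exists>A. sentR A \<and> y = fcode A) \<longrightarrow>
               \<not> (\<exists>A. sentR A \<and> evalpr (cRef S) [b, y] = fcode A)) \<and>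
     wfc (cReal S) 2 \<and>
       (\<forall>b A. sentR A \<longrightarrow> evalpr (cReal S) [b, fcode A] = fcode (realF S Var (num b) A)) \<and>
       (\<forall>b y. \<not> (\<exists>A. sentR A \<and> y = fcode A) \<longrightarrow>
               \<not> (\<exists>A. sentR A \<and> evalpr (cReal S) [b, y] = fcode A)) \<and>
     wffs (eqF S) \<and> pureL (eqF S) \<and> clf 2 (eqF S) \<and>
       (\<forall>P Fr Tr e. holds P Fr Tr e (eqF S) = eq_rel (e 0) (e 1))"

section \<open>The theory RR^+_{<g}\<close>

definition logax :: "fm \<Rightarrow> bool" where
  "logax A \<longleftrightarrow>
     (\<exists>B C. A = Imp B (Imp C B)) \<or>
     (\<exists>B C D. A = Imp (Imp B (Imp C D)) (Imp (Imp B C) (Imp B D))) \<or>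
     (\<exists>B C. A = Imp (Imp (Imp B C) B) B) \<or>
     (\<exists>B. A = Imp Fls B) \<or>
     (\<exists>B t. A = Imp (All B) (subst0 t B)) \<or>
     (\<exists>B C. A = Imp (All (Imp (liftf B) C)) (Imp B (All C))) \<or>
     (\<exists>t. A = FEq t t) \<or>
     (\<exists>s t B. A = Imp (FEq s t) (Imp (subst0 s B) (subst0 t B)))"

definition vars :: "nat \<Rightarrow> tm list" where "vars n = map Var [0..<n]"

definition defeqs :: "pfn \<Rightarrow> fm set" where
  "defeqs c = (case c of
      PZ n \<Rightarrow> {FEq (App c (vars n)) Zero}
    | PS \<Rightarrow> {}
    | PProj n i \<Rightarrow> {FEq (App c (vars n)) (Var i)}
    | PComp m f gs \<Rightarrow> {FEq (App c (vars m)) (App f (map (\<lambda>g. App g (vars m)) gs))}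
    | PRec n f g \<Rightarrow>
        (let xs = map Var [1..<Suc n] in
          {FEq (App c (Zero # xs)) (App f xs),
           FEq (App c (Sc (Var 0) # xs)) (App g (Var 0 # App c (Var 0 # xs) # xs))}))"

definition Ind :: "fm \<Rightarrow> fm" where
  "Ind A = Imp (subst0 Zero A)
               (Imp (All (Imp A (fsub (\<lambda>j. if j = 0 then Sc (Var 0) else Var j) A)))
                    (All A))"

definition paax :: "fm \<Rightarrow> bool" where
  "paax A \<longleftrightarrow>
     A = Neg (FEq (Sc (Var 0)) Zero) \<or>
     A = Imp (FEq (Sc (Var 0)) (Sc (Var 1))) (FEq (Var 0) (Var 1)) \<or>
     (\<exists>c. wfpr c \<and> A \<in> defeqs c) \<or>
     (\<exists>B. A = Ind B)"

definition isone :: "tm \<Rightarrow> fm" where "isone t = FEq t (Sc Zero)"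

text \<open>RR1: free variables a = 0, b = 1, c = 2.\<close>
definition RR1 :: "rsyms \<Rightarrow> fm" where
  "RR1 S = Imp (isone (App (cT1 S) [Var 0, Var 1, Var 2]))
               (Imp (Mem (p0T S (Var 2))) (Mem (pairT S (Var 0) (Var 1))))"

text \<open>RR2: free a = 0.\<close>
definition RR2 :: "rsyms \<Rightarrow> nat \<Rightarrow> fm" where
  "RR2 S b = All (Imp (isone (App (cSent S) [num b, Var 0]))
                 (Iff (Tp b (Var 1) (Var 0))
                      (All (Imp (Fp b (Var 0) (Var 1)) (Mem (pairT S (Var 2) (Var 0)))))))"

text \<open>RR3: free a = 0; bound \<forall>s \<forall>t \<forall>x.\<close>
definition RR3 :: "rsyms \<Rightarrow> nat \<Rightarrow> fm" where
  "RR3 S b = All (All (All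
     (Imp (isone (App (cSent1 S) [num b, Var 0]))
       (Imp (fsub (\<lambda>j. if j = 0 then Var 2 else if j = 1 then Var 1 else Var j) (eqF S))
         (Imp (Fp b (Var 3) (App (cSubst S) [Var 0, Var 2]))
              (Fp b (Var 3) (App (cSubst S) [Var 0, Var 1])))))))"

text \<open>RR4 for an atomic L_pole formula P whose free variables are among 0..n-1; a = variable n.
  The code of P(x_0,...,x_{n-1}) (numerals substituted) is obtained by iterated instantiation.\<close>
primrec instterm :: "rsyms \<Rightarrow> fm \<Rightarrow> nat \<Rightarrow> tm" where
  "instterm S P 0 = num (fcode P)"
| "instterm S P (Suc i) = App (cInst S) [instterm S P i, Var i]"

definition atomicLp :: "fm \<Rightarrow> bool" where
  "atomicLp P \<longleftrightarrow> (\<exists>s t. P = FEq s t) \<or> (\<exists>t. P = Mem t)"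

definition RR4 :: "rsyms \<Rightarrow> nat \<Rightarrow> fm \<Rightarrow> nat \<Rightarrow> fm" where
  "RR4 S b P n = Iff (Fp b (Var n) (instterm S P n)) (Imp P (Mem (Var n)))"

text \<open>RR5: free a = 0; bound \<forall>A \<forall>B.\<close>
definition RR5 :: "rsyms \<Rightarrow> nat \<Rightarrow> fm" where
  "RR5 S b = All (All
     (Imp (isone (App (cSent S) [num b, Var 1]))
       (Imp (isone (App (cSent S) [num b, Var 0]))
         (Iff (Fp b (Var 2) (App (cImp S) [Var 1, Var 0]))
              (And (Tp b (p0T S (Var 2)) (Var 1)) (Fp b (p1T S (Var 2)) (Var 0)))))))"

text \<open>RR6: free a = 0.\<close>
definition RR6 :: "rsyms \<Rightarrow> nat \<Rightarrow> fm" where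
  "RR6 S b = All (Imp (isone (App (cSent1 S) [num b, Var 0]))
      (Iff (Fp b (Var 1) (App (cAll S) [Var 0]))
           (Fp b (p1T S (Var 1)) (App (cInst S) [Var 0, p0T S (Var 1)]))))"

text \<open>RR7, RR8 (for a < b): free a = 0, b = 1 (here the level indices are al, be).\<close>
definition RR7 :: "rsyms \<Rightarrow> nat \<Rightarrow> nat \<Rightarrow> fm" where
  "RR7 S al be = All (Imp (isone (App (cSent S) [num al, Var 0]))
      (Iff (Fp be (Var 1) (App (cMkF S) [num al, Var 2, Var 0]))
           (refF S Var (Var 1) (Fp al (Var 2) (Var 0)))))"

definition RR8 :: "rsyms \<Rightarrow> nat \<Rightarrow> nat \<Rightarrow> fm" where
  "RR8 S al be = All (Imp (isone (App (cSent S) [num al, Var 0]))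
      (Iff (Fp be (Var 1) (App (cMkT S) [num al, Var 2, Var 0]))
           (refF S Var (Var 1) (Tp al (Var 2) (Var 0)))))"

text \<open>RR9, RR10: free a = 0, b = 1; bound \<forall>d \<forall>x.\<close>
definition RR9 :: "rsyms \<Rightarrow> nat \<Rightarrow> fm" where
  "RR9 S be = All (Imp (isone (App (cLt S) [Var 0, num be]))
     (All (Imp (isone (App (cSent S) [Var 1, Var 0]))
        (Iff (Fp be (Var 2) (App (cMkF S) [Var 1, Var 3, Var 0]))
             (Fp be (Var 2) (App (cRef S) [Var 3, Var 0]))))))"

definition RR10 :: "rsyms \<Rightarrow> nat \<Rightarrow> fm" where
  "RR10 S be = All (Imp (isone (App (cLt S) [Var 0, num be]))
     (All (Imp (isone (App (cSent S) [Var 1, Var 0]))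
        (Iff (Fp be (Var 2) (App (cMkT S) [Var 1, Var 3, Var 0]))
             (Fp be (Var 2) (App (cReal S) [Var 3, Var 0]))))))"

definition rrax :: "(nat \<Rightarrow> nat \<Rightarrow> bool) \<Rightarrow> rsyms \<Rightarrow> nat \<Rightarrow> fm \<Rightarrow> bool" where
  "rrax lt S g A \<longleftrightarrow>
     A = RR1 S \<or>
     (\<exists>b. lt b g \<and> (A = RR2 S b \<or> A = RR3 S b \<or> A = RR5 S b \<or> A = RR6 S b \<or>
                      A = RR9 S b \<or> A = RR10 S b)) \<or>
     (\<exists>b P n. lt b g \<and> atomicLp P \<and> clf n P \<and> A = RR4 S b P n) \<or>
     (\<exists>al be. lt al be \<and> lt be g \<and> (A = RR7 S al be \<or> A = RR8 S al be))"

text \<open>Derivability in RR^+_{<g}.  All axiom instances are L_R^{<g}-formulas; open formulas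
  are allowed (free variables read universally).\<close>
inductive rrprov :: "(nat \<Rightarrow> nat \<Rightarrow> bool) \<Rightarrow> rsyms \<Rightarrow> nat \<Rightarrow> fm \<Rightarrow> bool"
  for lt S g where
  ax: "\<lbrakk> logax A \<or> paax A \<or> rrax lt S g A; inL lt g A \<rbrakk> \<Longrightarrow> rrprov lt S g A"
| mp: "\<lbrakk> rrprov lt S g (Imp A B); rrprov lt S g A \<rbrakk> \<Longrightarrow> rrprov lt S g B"
| gen: "rrprov lt S g A \<Longrightarrow> rrprov lt S g (All A)"
| reflrule: "\<lbrakk> rrprov lt S g (Tp b t (num (fcode A))); wft t; clt 0 t; sentL A; lt b g \<rbrakk>
             \<Longrightarrow> rrprov lt S g A"

section \<open>Realisability models\<close>

definition pole :: "(nat \<Rightarrow> nat \<Rightarrow> nat \<Rightarrow> bool) \<Rightarrow> nat set \<Rightarrow> bool" where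
  "pole kT P \<longleftrightarrow> (\<forall>e m n. (\<exists>w. kT e m w \<and> pj0 w = n) \<and> n \<in> P \<longrightarrow> pr e m \<in> P)"

text \<open>The inductive clauses defining ||A||^{<g}_pole on L_R^{<g}-sentences
  (and the empty set elsewhere).\<close>
definition sref_clauses :: "(nat \<Rightarrow> nat \<Rightarrow> bool) \<Rightarrow> rsyms \<Rightarrow> nat \<Rightarrow> nat set
                              \<Rightarrow> (fm \<Rightarrow> nat set) \<Rightarrow> bool" where
  "sref_clauses lt S g P f \<longleftrightarrow>
     (\<forall>A. \<not> sentlt lt g A \<longrightarrow> f A = {}) \<and>
     (\<forall>A. sentlt lt g A \<longrightarrow> f A = (case A of
         FEq s t \<Rightarrow> {n. cv s = cv t \<longrightarrow> n \<in> P}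
       | Mem t \<Rightarrow> {n. cv t \<in> P \<longrightarrow> n \<in> P}
       | Fp b s t \<Rightarrow> {n. \<exists>B. sentlt lt b B \<and> cv t = fcode B \<and> n \<in> f (refF S Var (num (cv s)) B)}
       | Tp b s t \<Rightarrow> {n. \<exists>B. sentlt lt b B \<and> cv t = fcode B \<and> n \<in> f (realF S Var (num (cv s)) B)}
       | Imp A1 A2 \<Rightarrow> {n. (\<forall>m\<in>f A1. pr (pj0 n) m \<in> P) \<and> pj1 n \<in> f A2}
       | All A1 \<Rightarrow> {n. pj1 n \<in> f (subst0 (num (pj0 n)) A1)}))"

definition sref :: "(nat \<Rightarrow> nat \<Rightarrow> bool) \<Rightarrow> rsyms \<Rightarrow> nat \<Rightarrow> nat set \<Rightarrow> fm \<Rightarrow> nat set" where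
  "sref lt S g P = (THE f. sref_clauses lt S g P f)"

definition sreal :: "(nat \<Rightarrow> nat \<Rightarrow> bool) \<Rightarrow> rsyms \<Rightarrow> nat \<Rightarrow> nat set \<Rightarrow> fm \<Rightarrow> nat set" where
  "sreal lt S g P A = {n. \<forall>m\<in>sref lt S g P A. pr n m \<in> P}"

definition FF :: "(nat \<Rightarrow> nat \<Rightarrow> bool) \<Rightarrow> rsyms \<Rightarrow> nat \<Rightarrow> nat set \<Rightarrow> nat \<Rightarrow> (nat \<times> nat) set" where
  "FF lt S g P b = {(n, fcode A) | n A. lt b g \<and> sentlt lt b A \<and> n \<in> sref lt S g P A}"

definition TT :: "(nat \<Rightarrow> nat \<Rightarrow> bool) \<Rightarrow> rsyms \<Rightarrow> nat \<Rightarrow> nat set \<Rightarrow> nat \<Rightarrow> (nat \<times> nat) set" where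
  "TT lt S g P b = {(n, fcode A) | n A. lt b g \<and> sentlt lt b A \<and> n \<in> sreal lt S g P A}"

definition models :: "(nat \<Rightarrow> nat \<Rightarrow> bool) \<Rightarrow> rsyms \<Rightarrow> nat \<Rightarrow> nat set \<Rightarrow> fm \<Rightarrow> bool" where
  "models lt S g P A \<longleftrightarrow> (\<forall>e. holds P (FF lt S g P) (TT lt S g P) e A)"

end

theory Submission
  imports Defs "HOL-Library.Multiset"
begin

text \<open>Soundness is proved by induction on derivations, for all poles at once.  The refutation
  sets are a well-founded fixpoint: the clause for \<open>F\<^sub>b\<close> only refers to refutation formulas
  of levels below \<open>b\<close>, and every other clause to smaller formulas without new levels.  Axioms
  RR2--RR10 are then just the fixpoint equations read through the Goedel numbering.  For the
  reflection rule one uses the empty pole: if \<open>t T\<^sub>b \<ulcorner>A\<urcorner>\<close> holds there, the realiser \<open>t\<close>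
  forces \<open>\<parallel>A\<parallel>\<close> to be empty, and for an arithmetical sentence \<open>A\<close> the refutation set relative
  to the empty pole is empty exactly when \<open>A\<close> is true.\<close>

lemma hd0_Cons [simp]: "hd0 (x # xs) = x"
  by (simp add: hd0_def)

lemma pj_pr [simp]: "pj0 (pr a b) = a" "pj1 (pr a b) = b"
  by (auto simp: pj0_def pj1_def pr_def)

lemma econs_simps [simp]: "econs n e 0 = n" "econs n e (Suc k) = e k"
  by (auto simp: econs_def)

lemma econs_numeral [simp]: "econs n e (numeral w) = e (pred_numeral w)"
  by (simp add: econs_def numeral_eq_Suc)

lemma scons_simps [simp]: "scons u \<sigma> 0 = u" "scons u \<sigma> (Suc k) = \<sigma> k"
  by (auto simp: scons_def)

lemma up_simps [simp]: "up \<sigma> 0 = Var 0" "up \<sigma> (Suc k) = liftt (\<sigma> k)"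
  by (auto simp: up_def)

lemma
  shows evt_num [simp]: "evt e (num n) = n"
    and tsub_num [simp]: "tsub \<sigma> (num n) = num n"
    and clt_num [simp]: "clt k (num n)"
    and wft_num [simp]: "wft (num n)"
  by (induction n) auto

lemma cv_num [simp]: "cv (num n) = n"
  by (simp add: cv_def)

lemma evt_tsub: "evt e (tsub \<sigma> t) = evt (\<lambda>j. evt e (\<sigma> j)) t"
  by (induction t) (auto intro!: arg_cong[where f="evalpr _"])

lemma cv_tsub: "cv (tsub \<sigma> u) = evt (\<lambda>j. cv (\<sigma> j)) u"
  by (simp add: cv_def evt_tsub)

lemma evt_cong: "clt k t \<Longrightarrow> (\<And>j. j < k \<Longrightarrow> e j = e' j) \<Longrightarrow> evt e t = evt e' t"
  by (induction t) (auto intro!: arg_cong[where f="evalpr _"])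

lemma evt_liftt [simp]: "evt (econs n e) (liftt t) = evt e t"
  by (simp add: liftt_def evt_tsub)

lemma evt_up: "(\<lambda>j. evt (econs n e) (up \<sigma> j)) = econs n (\<lambda>j. evt e (\<sigma> j))"
  by (rule ext, case_tac j) auto

lemma holds_fsub: "holds P Fr Tr e (fsub \<sigma> A) = holds P Fr Tr (\<lambda>j. evt e (\<sigma> j)) A"
  by (induction A arbitrary: e \<sigma>) (auto simp: evt_tsub evt_up)

lemma holds_subst0: "holds P Fr Tr e (subst0 t A) = holds P Fr Tr (econs (evt e t) e) A"
proof -
  have "(\<lambda>j. evt e (scons t Var j)) = econs (evt e t) e"
    by (rule ext, case_tac j) auto
  then show ?thesis
    by (simp add: subst0_def holds_fsub)
qed

lemma holds_liftf: "holds P Fr Tr (econs n e) (liftf A) = holds P Fr Tr e A"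
  by (simp add: liftf_def holds_fsub)

lemma tsub_Var [simp]: "tsub Var t = t"
  by (induction t) (auto simp: map_idI)

lemma tsub_tsub: "tsub \<sigma> (tsub \<tau> t) = tsub (\<lambda>j. tsub \<sigma> (\<tau> j)) t"
  by (induction t) auto

lemma tsub_up: "tsub (up \<sigma>) (up \<tau> j) = up (\<lambda>j. tsub \<sigma> (\<tau> j)) j"
  by (cases j) (auto simp: liftt_def tsub_tsub)

lemma fsub_fsub: "fsub \<sigma> (fsub \<tau> A) = fsub (\<lambda>j. tsub \<sigma> (\<tau> j)) A"
  by (induction A arbitrary: \<sigma> \<tau>) (auto simp: tsub_tsub tsub_up)

lemma subst0_up: "subst0 u (fsub (up \<sigma>) A) = fsub (scons u \<sigma>) A"
proof -
  have "(\<lambda>j. tsub (scons u Var) (up \<sigma> j)) = scons u \<sigma>"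
    by (rule ext, case_tac j) (auto simp: liftt_def tsub_tsub)
  then show ?thesis
    by (simp add: subst0_def fsub_fsub)
qed

lemma fsub_Var [simp]: "fsub Var A = A"
proof -
  have "up Var = Var"
    by (rule ext, case_tac x) (auto simp: liftt_def)
  then have "\<sigma> = Var \<Longrightarrow> fsub \<sigma> A = A" for \<sigma>
    by (induction A arbitrary: \<sigma>) (auto simp: map_idI)
  then show ?thesis
    by simp
qed

lemma size_fsub [simp]: "size (fsub \<sigma> A) = size A"
  by (induction A arbitrary: \<sigma>) auto

lemma idx_fsub [simp]: "idx (fsub \<sigma> A) = idx A"
  by (induction A arbitrary: \<sigma>) auto

lemma pureL_fsub [simp]: "pureL (fsub \<sigma> A) = pureL A"
  by (induction A arbitrary: \<sigma>) auto

lemma finite_idx [simp]: "finite (idx A)"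
  by (induction A) auto

lemma idx_pureL: "pureL A \<Longrightarrow> idx A = {}"
  by (induction A) auto

lemma wft_tsub: "wft t \<Longrightarrow> (\<And>j. wft (\<sigma> j)) \<Longrightarrow> wft (tsub \<sigma> t)"
  by (induction t) auto

lemma wft_liftt [simp]: "wft t \<Longrightarrow> wft (liftt t)"
  by (simp add: liftt_def wft_tsub)

lemma wft_up: "(\<And>j. wft (\<sigma> j)) \<Longrightarrow> wft (up \<sigma> j)"
  by (cases j) auto

lemma wffs_fsub: "wffs A \<Longrightarrow> (\<And>j. wft (\<sigma> j)) \<Longrightarrow> wffs (fsub \<sigma> A)"
  by (induction A arbitrary: \<sigma>) (auto simp: wft_tsub wft_up)

lemma clt_tsub: "clt k t \<Longrightarrow> (\<And>j. j < k \<Longrightarrow> clt m (\<sigma> j)) \<Longrightarrow> clt m (tsub \<sigma> t)"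
  by (induction t) auto

lemma clt_liftt [simp]: "clt m t \<Longrightarrow> clt (Suc m) (liftt t)"
  by (auto simp: liftt_def intro: clt_tsub)

lemma clf_fsub: "clf k A \<Longrightarrow> (\<And>j. j < k \<Longrightarrow> clt m (\<sigma> j)) \<Longrightarrow> clf m (fsub \<sigma> A)"
proof (induction A arbitrary: k m \<sigma>)
  case (All A)
  have "\<And>j. j < Suc k \<Longrightarrow> clt (Suc m) (up \<sigma> j)"
    using All.prems(2) by (case_tac j) auto
  then show ?case
    using All by auto
qed (auto intro: clt_tsub)

lemma sentlt_subst0:
  assumes "inL lt b A" "clf 1 A" "wft t" "clt 0 t"
  shows "sentlt lt b (subst0 t A)"
proof -
  have "wft (scons t Var j)" for j
    using assms by (cases j) auto
  then show ?thesis
    using assms unfolding sentlt_def inL_def subst0_def by (auto intro: wffs_fsub clf_fsub)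
qed

lemma sentR_sentlt: "sentlt lt b A \<Longrightarrow> sentR A"
  by (simp add: sentlt_def sentR_def inL_def)

lemma sentlt_Imp [simp]: "sentlt lt b (Imp A B) \<longleftrightarrow> sentlt lt b A \<and> sentlt lt b B"
  by (auto simp: sentlt_def inL_def)

lemma Fls_simps [simp]:
  "holds P Fr Tr e Fls = False" "idx Fls = {}" "wffs Fls" "clf k Fls"
  by (auto simp: Fls_def)

lemma connective_simps [simp]:
  "holds P Fr Tr e (Neg A) = (\<not> holds P Fr Tr e A)"
  "holds P Fr Tr e (And A B) = (holds P Fr Tr e A \<and> holds P Fr Tr e B)"
  "holds P Fr Tr e (Iff A B) = (holds P Fr Tr e A = holds P Fr Tr e B)"
  "idx (Neg A) = idx A" "idx (And A B) = idx A \<union> idx B" "idx (Iff A B) = idx A \<union> idx B"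
  "wffs (Neg A) = wffs A" "wffs (And A B) = (wffs A \<and> wffs B)" "wffs (Iff A B) = (wffs A \<and> wffs B)"
  "clf k (Neg A) = clf k A" "clf k (And A B) = (clf k A \<and> clf k B)"
  "clf k (Iff A B) = (clf k A \<and> clf k B)"
  by (auto simp: Neg_def And_def Iff_def)

section \<open>Injectivity of the Goedel numbering\<close>

lemma lcode_inj: "lcode xs = lcode ys \<Longrightarrow> xs = ys"
proof (induction xs arbitrary: ys)
  case Nil
  then show ?case
    by (cases ys) auto
next
  case (Cons x xs)
  then show ?case
    by (cases ys) auto
qed

lemma pcode_inj: "pcode p = pcode q \<Longrightarrow> p = q"
proof (induction p arbitrary: q)
  case (PComp m f gs)
  then show ?case
    by (cases q) (auto dest!: lcode_inj elim!: list.inj_map_strong[rotated])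
qed (case_tac q; auto)+

lemma tcode_inj: "tcode s = tcode t \<Longrightarrow> s = t"
proof (induction s arbitrary: t)
  case (App f ts)
  then show ?case
    by (cases t) (auto dest!: lcode_inj pcode_inj elim!: list.inj_map_strong[rotated])
qed (case_tac t; auto)+

lemma fcode_eq_iff [simp]: "fcode A = fcode B \<longleftrightarrow> A = B"
  by (induction A arbitrary: B; case_tac B; auto dest: tcode_inj)

declare fcode.simps [simp del]

section \<open>The refutation sets as a well-founded fixpoint\<close>

lemma idx_refF: "idx (refF S \<sigma> s A) \<subseteq> idx A"
  by (induction A arbitrary: \<sigma> s) (auto; blast)+

lemma idx_realF: "idx (realF S \<sigma> s A) \<subseteq> idx A"
  using idx_refF by (auto simp: realF_def)

definition sref_step :: "(nat \<Rightarrow> nat \<Rightarrow> bool) \<Rightarrow> rsyms \<Rightarrow> nat \<Rightarrow> nat set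
                              \<Rightarrow> (fm \<Rightarrow> nat set) \<Rightarrow> fm \<Rightarrow> nat set" where
  "sref_step lt S g P f A = (if sentlt lt g A then (case A of
         FEq s t \<Rightarrow> {n. cv s = cv t \<longrightarrow> n \<in> P}
       | Mem t \<Rightarrow> {n. cv t \<in> P \<longrightarrow> n \<in> P}
       | Fp b s t \<Rightarrow> {n. \<exists>B. sentlt lt b B \<and> cv t = fcode B \<and> n \<in> f (refF S Var (num (cv s)) B)}
       | Tp b s t \<Rightarrow> {n. \<exists>B. sentlt lt b B \<and> cv t = fcode B \<and> n \<in> f (realF S Var (num (cv s)) B)}
       | Imp A1 A2 \<Rightarrow> {n. (\<forall>m\<in>f A1. pr (pj0 n) m \<in> P) \<and> pj1 n \<in> f A2}
       | All A1 \<Rightarrow> {n. pj1 n \<in> f (subst0 (num (pj0 n)) A1)}) else {})"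

lemma sref_clauses_iff_fixpoint:
  "sref_clauses lt S g P f \<longleftrightarrow> (\<forall>A. f A = sref_step lt S g P f A)"
  unfolding sref_clauses_def sref_step_def by auto

definition level_order :: "(nat \<Rightarrow> nat \<Rightarrow> bool) \<Rightarrow> (fm \<times> fm) set" where
  "level_order lt =
     inv_image (mult {(x, y). lt x y} <*lex*> less_than) (\<lambda>A. (mset_set (idx A), size A))"

lemma wf_level_order: "wf {(x, y). lt x y} \<Longrightarrow> wf (level_order lt)"
  unfolding level_order_def by (intro wf_inv_image wf_lex_prod wf_mult) auto

lemma level_order_smaller:
  assumes "idx A' \<subseteq> idx A" "size A' < size A"
  shows "(A', A) \<in> level_order lt"
proof (cases "idx A' = idx A")
  case True
  then show ?thesis
    using assms by (simp add: level_order_def)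
next
  case False
  then have "mset_set (idx A') \<subset># mset_set (idx A)"
    using assms by (simp add: subset_mset.less_le)
  then show ?thesis
    by (simp add: level_order_def subset_implies_mult)
qed

lemma level_order_lower_level:
  assumes "\<forall>d\<in>idx A'. lt d b" "idx A = {b}"
  shows "(A', A) \<in> level_order lt"
proof -
  have "({#} + mset_set (idx A'), {#} + {#b#}) \<in> mult {(x, y). lt x y}"
    using assms by (intro one_step_implies_mult) auto
  then show ?thesis
    using assms by (simp add: level_order_def)
qed

lemma adm_sref_step: "adm_wf (level_order lt) (sref_step lt S g P)"
  unfolding adm_wf_def
proof (intro allI impI)
  fix f f' :: "fm \<Rightarrow> nat set" and A
  assume below: "\<forall>A'. (A', A) \<in> level_order lt \<longrightarrow> f A' = f' A'"
  have lower: "f A' = f' A'" if "sentlt lt b B" "idx A' \<subseteq> idx B" "idx A = {b}" for A' B b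
    using that below level_order_lower_level[of A' lt b A] unfolding sentlt_def inL_def by blast
  have smaller: "f A' = f' A'" if "idx A' \<subseteq> idx A" "size A' < size A" for A'
    using that below level_order_smaller by blast
  show "sref_step lt S g P f A = sref_step lt S g P f' A"
  proof (cases A)
    case (Fp b s t)
    then show ?thesis
      using lower[OF _ idx_refF] by (auto simp: sref_step_def)
  next
    case (Tp b s t)
    then show ?thesis
      using lower[OF _ idx_realF] by (auto simp: sref_step_def)
  next
    case (Imp A1 A2)
    then show ?thesis
      using smaller[of A1] smaller[of A2] by (simp add: sref_step_def)
  next
    case (All A1)
    then show ?thesis
      using smaller by (simp add: sref_step_def subst0_def)
  qed (simp_all add: sref_step_def)
qed

lemma sref_unfold:
  assumes "wf {(x, y). lt x y}"
  shows "sref lt S g P A = sref_step lt S g P (sref lt S g P) A"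
proof -
  have wf: "wf (level_order lt)"
    using wf_level_order assms by blast
  have ex: "sref_clauses lt S g P (wfrec (level_order lt) (sref_step lt S g P))"
    unfolding sref_clauses_iff_fixpoint using wfrec_fixpoint[OF wf adm_sref_step] by metis
  have unique: "f = f'" if "sref_clauses lt S g P f" "sref_clauses lt S g P f'" for f f'
  proof
    fix A
    show "f A = f' A"
      using wf
    proof (induction A rule: wf_induct_rule)
      case (less A)
      have "f A = sref_step lt S g P f A"
        using that sref_clauses_iff_fixpoint by metis
      also have "\<dots> = sref_step lt S g P f' A"
        using adm_sref_step less unfolding adm_wf_def by blast
      also have "\<dots> = f' A"
        using that sref_clauses_iff_fixpoint by metis
      finally show ?case .
    qed
  qed
  have "sref_clauses lt S g P (sref lt S g P)"
    unfolding sref_def using ex unique by (metis theI)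
  then show ?thesis
    using sref_clauses_iff_fixpoint by metis
qed

lemma logax_sound: "logax A \<Longrightarrow> holds P Fr Tr e A"
  unfolding logax_def by (auto simp: holds_subst0 holds_liftf)

lemma Ind_sound: "holds P Fr Tr e (Ind A)"
proof -
  have shift: "(\<lambda>j. evt (econs n e) (if j = 0 then Sc (Var 0) else Var j)) = econs (Suc n) e" for n
    by (rule ext, case_tac j) auto
  show ?thesis
  proof (simp add: Ind_def holds_subst0 holds_fsub shift, intro impI allI)
    fix n
    assume "holds P Fr Tr (econs 0 e) A"
      and "\<forall>n. holds P Fr Tr (econs n e) A \<longrightarrow> holds P Fr Tr (econs (Suc n) e) A"
    then show "holds P Fr Tr (econs n e) A"
      by (induction n) auto
  qed
qed

lemma defeqs_sound: "wfpr c \<Longrightarrow> A \<in> defeqs c \<Longrightarrow> holds P Fr Tr e A"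
  by (cases c) (auto simp: defeqs_def vars_def nth0_def Let_def comp_def)

lemma paax_sound: "paax A \<Longrightarrow> holds P Fr Tr e A"
  unfolding paax_def by (auto simp: Neg_def Ind_sound defeqs_sound)

section \<open>Soundness of RR\<close>

context
  fixes lt :: "nat \<Rightarrow> nat \<Rightarrow> bool" and kT :: "nat \<Rightarrow> nat \<Rightarrow> nat \<Rightarrow> bool" and S :: rsyms
  assumes wf_lt: "wf {(x, y). lt x y}" and trans_lt: "transp lt" and good: "good_syms lt kT S"
begin

abbreviation holds_in :: "nat \<Rightarrow> nat set \<Rightarrow> (nat \<Rightarrow> nat) \<Rightarrow> fm \<Rightarrow> bool" where
  "holds_in g P \<equiv> holds P (FF lt S g P) (TT lt S g P)"

lemma lt_trans: "lt a b \<Longrightarrow> lt b c \<Longrightarrow> lt a c"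
  using trans_lt by (meson transpD)

lemma inL_mono: "inL lt b A \<Longrightarrow> lt b g \<Longrightarrow> inL lt g A"
  unfolding inL_def using lt_trans by blast

lemma sentlt_mono: "sentlt lt b A \<Longrightarrow> lt b g \<Longrightarrow> sentlt lt g A"
  unfolding sentlt_def using inL_mono by blast

lemma evalpr_syms [simp]:
  "evalpr (cPair S) [x, y] = pr x y"
  "evalpr (cP0 S) [x] = pj0 x"
  "evalpr (cP1 S) [x] = pj1 x"
  "evalpr (cT1 S) [a, b, c] = (if kT a b c then 1 else 0)"
  "evalpr (cSent S) [b, x] = (if \<exists>A. sentlt lt b A \<and> x = fcode A then 1 else 0)"
  "evalpr (cSent1 S) [b, x] = (if \<exists>A. inL lt b A \<and> clf 1 A \<and> x = fcode A then 1 else 0)"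
  "evalpr (cLt S) [x, y] = (if lt x y then 1 else 0)"
  "evalpr (cImp S) [fcode A, fcode B] = fcode (Imp A B)"
  "evalpr (cAll S) [fcode A] = fcode (All A)"
  "evalpr (cInst S) [fcode A, n] = fcode (subst0 (num n) A)"
  "evalpr (cSubst S) [fcode A, tcode t] = fcode (subst0 t A)"
  "evalpr (cMkF S) [a, b, x] = fcode (Fp a (num b) (num x))"
  "evalpr (cMkT S) [a, b, x] = fcode (Tp a (num b) (num x))"
  using good unfolding good_syms_def by auto

lemma evalpr_cRef_cReal:
  "sentR A \<Longrightarrow> evalpr (cRef S) [b, fcode A] = fcode (refF S Var (num b) A)"
  "sentR A \<Longrightarrow> evalpr (cReal S) [b, fcode A] = fcode (realF S Var (num b) A)"
  using good unfolding good_syms_def by auto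

lemma holds_eqF: "holds P Fr Tr e (eqF S) = eq_rel (e 0) (e 1)"
  using good unfolding good_syms_def by auto

lemma evt_pairing [simp]:
  "evt e (pairT S a b) = pr (evt e a) (evt e b)"
  "evt e (p0T S a) = pj0 (evt e a)"
  "evt e (p1T S a) = pj1 (evt e a)"
  by (auto simp: pairT_def p0T_def p1T_def)

lemma wft_pairing [simp]:
  "wft (pairT S a b) \<longleftrightarrow> wft a \<and> wft b" "wft (p0T S a) \<longleftrightarrow> wft a" "wft (p1T S a) \<longleftrightarrow> wft a"
  using good by (auto simp: good_syms_def wfc_def pairT_def p0T_def p1T_def)

lemma clt_pairing [simp]:
  "clt m (pairT S a b) \<longleftrightarrow> clt m a \<and> clt m b" "clt m (p0T S a) \<longleftrightarrow> clt m a"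
  "clt m (p1T S a) \<longleftrightarrow> clt m a"
  by (auto simp: pairT_def p0T_def p1T_def)

lemma refF_wf:
  assumes "clf k A" "wffs A" "\<And>j. wft (\<sigma> j)" "\<And>j. j < k \<Longrightarrow> clt m (\<sigma> j)" "wft s" "clt m s"
  shows "wffs (refF S \<sigma> s A) \<and> clf m (refF S \<sigma> s A)"
  using assms
proof (induction A arbitrary: \<sigma> s k m)
  case (Imp A1 A2)
  have "wffs (refF S (liftt \<circ> \<sigma>) (Var 0) A1) \<and> clf (Suc m) (refF S (liftt \<circ> \<sigma>) (Var 0) A1)"
    using Imp by (intro Imp.IH(1)[of k]) auto
  moreover have "wffs (refF S \<sigma> (p1T S s) A2) \<and> clf m (refF S \<sigma> (p1T S s) A2)"
    using Imp by (intro Imp.IH(2)[of k]) auto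
  ultimately show ?case
    using Imp.prems by auto
next
  case (All A)
  have "wft (scons (p0T S s) \<sigma> j)" "j < Suc k \<Longrightarrow> clt m (scons (p0T S s) \<sigma> j)" for j
    using All by (cases j; auto)+
  then have "wffs (refF S (scons (p0T S s) \<sigma>) (p1T S s) A) \<and>
      clf m (refF S (scons (p0T S s) \<sigma>) (p1T S s) A)"
    using All by (intro All.IH[of "Suc k"]) auto
  then show ?case
    by simp
qed (use good in \<open>auto intro: wft_tsub clt_tsub simp: good_syms_def wfc_def\<close>)

lemma sentlt_refF:
  assumes "sentlt lt b A"
  shows "sentlt lt b (refF S Var (num n) A)"
proof -
  have "wffs (refF S Var (num n) A) \<and> clf 0 (refF S Var (num n) A)"
    using assms by (intro refF_wf[where k=0]) (auto simp: sentlt_def inL_def)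
  then show ?thesis
    using assms idx_refF[of S Var "num n" A] unfolding sentlt_def inL_def by blast
qed

lemma sentlt_realF:
  assumes "sentlt lt b A"
  shows "sentlt lt b (realF S Var (num n) A)"
proof -
  have "wffs (refF S (liftt \<circ> Var) (Var 0) A) \<and> clf 1 (refF S (liftt \<circ> Var) (Var 0) A)"
    using assms by (intro refF_wf[where k=0]) (auto simp: sentlt_def inL_def)
  then show ?thesis
    using assms idx_refF[of S "liftt \<circ> Var" "Var 0" A]
    unfolding sentlt_def inL_def realF_def by (auto simp: liftt_def)
qed

lemma sref_simps:
  "sentlt lt g (FEq s t) \<Longrightarrow> sref lt S g P (FEq s t) = {n. cv s = cv t \<longrightarrow> n \<in> P}"
  "sentlt lt g (Mem t) \<Longrightarrow> sref lt S g P (Mem t) = {n. cv t \<in> P \<longrightarrow> n \<in> P}"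
  "sentlt lt g (Fp b s t) \<Longrightarrow> sref lt S g P (Fp b s t) =
     {n. \<exists>B. sentlt lt b B \<and> cv t = fcode B \<and> n \<in> sref lt S g P (refF S Var (num (cv s)) B)}"
  "sentlt lt g (Tp b s t) \<Longrightarrow> sref lt S g P (Tp b s t) =
     {n. \<exists>B. sentlt lt b B \<and> cv t = fcode B \<and> n \<in> sref lt S g P (realF S Var (num (cv s)) B)}"
  "sentlt lt g (Imp A1 A2) \<Longrightarrow> sref lt S g P (Imp A1 A2) =
     {n. (\<forall>m\<in>sref lt S g P A1. pr (pj0 n) m \<in> P) \<and> pj1 n \<in> sref lt S g P A2}"
  "sentlt lt g (All A1) \<Longrightarrow> sref lt S g P (All A1) =
     {n. pj1 n \<in> sref lt S g P (subst0 (num (pj0 n)) A1)}"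
  by (subst sref_unfold[OF wf_lt]; simp add: sref_step_def)+

lemma mem_FF_fcode:
  "sentlt lt b A \<Longrightarrow> lt b g \<Longrightarrow> (n, fcode A) \<in> FF lt S g P b \<longleftrightarrow> n \<in> sref lt S g P A"
  by (auto simp: FF_def)

lemma mem_TT_fcode:
  "sentlt lt b A \<Longrightarrow> lt b g \<Longrightarrow> (n, fcode A) \<in> TT lt S g P b \<longleftrightarrow> n \<in> sreal lt S g P A"
  by (auto simp: TT_def)

lemma sentlt_Fp_Tp:
  "lt a b \<Longrightarrow> sentlt lt b (Fp a (num m) (num x))"
  "lt a b \<Longrightarrow> sentlt lt b (Tp a (num m) (num x))"
  by (auto simp: sentlt_def inL_def)

lemma sref_Fp_num: "lt a g \<Longrightarrow> sentlt lt a B \<Longrightarrow>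
    sref lt S g P (Fp a (num m) (num (fcode B))) = sref lt S g P (refF S Var (num m) B)"
  using sref_simps(3)[OF sentlt_Fp_Tp(1)] by auto

lemma sref_Tp_num: "lt a g \<Longrightarrow> sentlt lt a B \<Longrightarrow>
    sref lt S g P (Tp a (num m) (num (fcode B))) = sref lt S g P (realF S Var (num m) B)"
  using sref_simps(4)[OF sentlt_Fp_Tp(2)] by auto

lemma sref_empty_pole_iff_holds:
  assumes "sentL A"
  shows "sref lt S g {} A = {} \<longleftrightarrow> holds P Fr Tr e A"
  using assms
proof (induction "size A" arbitrary: A e rule: less_induct)
  case less
  have sA: "sentlt lt g A"
    using less.prems idx_pureL by (auto simp: sentL_def sentlt_def inL_def)
  show ?case
  proof (cases A)
    case (FEq s t)
    have "evt e s = cv s" "evt e t = cv t"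
      using less.prems FEq by (auto simp: sentL_def cv_def intro: evt_cong)
    then show ?thesis
      using sref_simps(1) sA FEq by auto
  next
    case (Imp A1 A2)
    have "sentL A1" "sentL A2"
      using less.prems Imp by (auto simp: sentL_def)
    then have IH: "sref lt S g {} A1 = {} \<longleftrightarrow> holds P Fr Tr e A1"
      "sref lt S g {} A2 = {} \<longleftrightarrow> holds P Fr Tr e A2"
      using less.hyps Imp by auto
    have "sref lt S g {} A = {} \<longleftrightarrow> sref lt S g {} A1 \<noteq> {} \<or> sref lt S g {} A2 = {}"
      using sref_simps(5)[of g A1 A2 "{}"] sA Imp by auto (metis pj_pr(2))
    then show ?thesis
      using IH Imp by auto
  next
    case (All A1)
    have "sentL (subst0 (num k) A1)" for k
    proof -
      have "sentlt lt g (subst0 (num k) A1)"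
        using less.prems All idx_pureL by (intro sentlt_subst0) (auto simp: sentL_def inL_def)
      then show ?thesis
        using less.prems All by (auto simp: sentL_def sentlt_def inL_def subst0_def)
    qed
    then have IH: "sref lt S g {} (subst0 (num k) A1) = {} \<longleftrightarrow> holds P Fr Tr e (subst0 (num k) A1)"
      for k
      using less.hyps All by (auto simp: subst0_def)
    have "sref lt S g {} A = {} \<longleftrightarrow> (\<forall>k. sref lt S g {} (subst0 (num k) A1) = {})"
      using sref_simps(6)[of g A1 "{}"] sA All by auto (metis pj_pr)
    then show ?thesis
      using IH All by (auto simp: holds_subst0)
  qed (use less.prems in \<open>auto simp: sentL_def\<close>)
qed

lemma sref_fsub_cong:
  assumes "inL lt g A" "clf k A" "\<forall>j. wft (\<sigma> j) \<and> wft (\<tau> j)"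
    "\<forall>j<k. clt 0 (\<sigma> j) \<and> clt 0 (\<tau> j) \<and> cv (\<sigma> j) = cv (\<tau> j)"
  shows "sref lt S g P (fsub \<sigma> A) = sref lt S g P (fsub \<tau> A)"
  using assms
proof (induction "size A" arbitrary: A k \<sigma> \<tau> rule: less_induct)
  case less
  have sent: "sentlt lt g (fsub \<sigma> A)" "sentlt lt g (fsub \<tau> A)"
    using less.prems unfolding sentlt_def inL_def by (auto intro: wffs_fsub clf_fsub)
  have cv_eq: "cv (tsub \<sigma> u) = cv (tsub \<tau> u)" if "clt k u" for u
    using less.prems(4) that by (simp add: cv_tsub) (rule evt_cong, auto)
  show ?case
  proof (cases A)
    case (Imp A1 A2)
    have "sref lt S g P (fsub \<sigma> A1) = sref lt S g P (fsub \<tau> A1)"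
      "sref lt S g P (fsub \<sigma> A2) = sref lt S g P (fsub \<tau> A2)"
      using less.prems Imp by (intro less.hyps[of _ k]; auto simp: inL_def)+
    then show ?thesis
      using sent Imp by (simp add: sref_simps)
  next
    case (All A1)
    have "sref lt S g P (fsub (scons (num m) \<sigma>) A1) = sref lt S g P (fsub (scons (num m) \<tau>) A1)"
      for m
      using less.prems All
      by (intro less.hyps[of A1 "Suc k"]) (auto simp: inL_def scons_def split: nat.split)
    then show ?thesis
      using sent All by (simp add: sref_simps subst0_up)
  qed (use sent cv_eq less.prems in \<open>simp_all add: sref_simps\<close>)
qed

lemma RR1_sound: "pole kT P \<Longrightarrow> holds_in g P e (RR1 S)"
  by (simp add: RR1_def isone_def) (auto simp: pole_def)

lemma RR2_sound: "lt b g \<Longrightarrow> holds_in g P e (RR2 S b)"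
  by (simp add: RR2_def isone_def) (auto simp: mem_FF_fcode mem_TT_fcode sreal_def FF_def)

lemma FF_subst_eq_rel:
  assumes "lt b g" "\<exists>A. inL lt b A \<and> clf 1 A \<and> x = fcode A" "eq_rel s t"
    "(a, evalpr (cSubst S) [x, s]) \<in> FF lt S g P b"
  shows "(a, evalpr (cSubst S) [x, t]) \<in> FF lt S g P b"
proof -
  obtain A where A: "inL lt b A" "clf 1 A" "x = fcode A"
    using assms by blast
  obtain s' t' where st: "wft s'" "wft t'" "clt 0 s'" "clt 0 t'" "s = tcode s'" "t = tcode t'"
    "cv s' = cv t'"
    using assms(3) unfolding eq_rel_def by blast
  have "sentlt lt b (subst0 s' A)" "sentlt lt b (subst0 t' A)"
    using A st by (auto intro: sentlt_subst0)
  moreover have "sref lt S g P (fsub (scons s' Var) A) = sref lt S g P (fsub (scons t' Var) A)"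
    using A st assms(1) inL_mono
    by (intro sref_fsub_cong[where k=1]) (auto simp: scons_def split: nat.split)
  ultimately show ?thesis
    using assms(1,4) A st by (simp add: mem_FF_fcode subst0_def)
qed

lemma RR3_sound: "lt b g \<Longrightarrow> holds_in g P e (RR3 S b)"
  using FF_subst_eq_rel
  by (simp add: RR3_def isone_def holds_fsub holds_eqF numeral_eq_Suc)

lemma evt_instterm:
  "evt e (instterm S Q i) = fcode (fsub (\<lambda>j. if j < i then num (e j) else Var (j - i)) Q)"
proof (induction i)
  case 0
  then show ?case
    by simp
next
  case (Suc i)
  have "tsub (scons (num (e i)) Var) (if j < i then num (e j) else Var (j - i)) =
        (if j < Suc i then num (e j) else Var (j - Suc i))" for j
    by (cases "j < i"; cases "j = i") (auto simp: scons_def split: nat.split)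
  then show ?case
    using Suc by (simp add: subst0_def fsub_fsub)
qed

lemma RR4_sound:
  assumes "lt b g" "atomicLp Q" "clf n Q" "inL lt g (RR4 S b Q n)"
  shows "holds_in g P e (RR4 S b Q n)"
proof -
  define \<sigma> where "\<sigma> = (\<lambda>j. if j < n then num (e j) else Var (j - n))"
  have "sentlt lt b (fsub \<sigma> Q)"
    using assms(2-4) unfolding sentlt_def inL_def
    by (auto simp: \<sigma>_def atomicLp_def RR4_def intro!: wffs_fsub clf_fsub)
  then have "holds_in g P e (Fp b (Var n) (instterm S Q n)) \<longleftrightarrow> e n \<in> sref lt S g P (fsub \<sigma> Q)"
    and sent: "sentlt lt g (fsub \<sigma> Q)"
    using assms(1) by (simp_all add: mem_FF_fcode evt_instterm \<sigma>_def sentlt_mono)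
  moreover have "cv (tsub \<sigma> u) = evt e u" if "clt n u" for u
    using that by (simp add: cv_tsub \<sigma>_def) (rule evt_cong, auto)
  then have "e n \<in> sref lt S g P (fsub \<sigma> Q) \<longleftrightarrow> (holds_in g P e Q \<longrightarrow> e n \<in> P)"
    using assms(2,3) sent by (auto simp: atomicLp_def sref_simps)
  ultimately show ?thesis
    unfolding RR4_def by simp
qed

lemma RR5_sound: "lt b g \<Longrightarrow> holds_in g P e (RR5 S b)"
  using sentlt_mono
  by (simp add: RR5_def isone_def) (auto simp: mem_FF_fcode mem_TT_fcode sref_simps sreal_def)

lemma RR6_sound:
  assumes "lt b g"
  shows "holds_in g P e (RR6 S b)"
proof -
  have sent_All: "sentlt lt b (All A)" if "inL lt b A" "clf 1 A" for A
    using that by (simp add: sentlt_def inL_def)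
  moreover have "sentlt lt g (All A)" if "inL lt b A" "clf 1 A" for A
    using sent_All[OF that] assms sentlt_mono by blast
  moreover have "sentlt lt b (subst0 (num n) A)" if "inL lt b A" "clf 1 A" for A n
    using that by (intro sentlt_subst0) auto
  ultimately show ?thesis
    using assms by (simp add: RR6_def isone_def) (auto simp: mem_FF_fcode sref_simps)
qed

lemma RR7_sound: "lt a b \<Longrightarrow> lt b g \<Longrightarrow> holds_in g P e (RR7 S a b)"
  using lt_trans sentlt_refF sentR_sentlt
  by (simp add: RR7_def isone_def)
    (auto simp: mem_FF_fcode sentlt_Fp_Tp sref_Fp_num evalpr_cRef_cReal)

lemma RR8_sound: "lt a b \<Longrightarrow> lt b g \<Longrightarrow> holds_in g P e (RR8 S a b)"
  using lt_trans sentlt_realF sentR_sentlt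
  by (simp add: RR8_def isone_def)
    (auto simp: mem_FF_fcode sentlt_Fp_Tp sref_Tp_num evalpr_cRef_cReal)

lemma RR9_sound: "lt b g \<Longrightarrow> holds_in g P e (RR9 S b)"
  using lt_trans sentlt_mono[OF sentlt_refF] sentR_sentlt
  by (simp add: RR9_def isone_def)
    (auto simp: mem_FF_fcode sentlt_Fp_Tp sref_Fp_num evalpr_cRef_cReal)

lemma RR10_sound: "lt b g \<Longrightarrow> holds_in g P e (RR10 S b)"
  using lt_trans sentlt_mono[OF sentlt_realF] sentR_sentlt
  by (simp add: RR10_def isone_def)
    (auto simp: mem_FF_fcode sentlt_Fp_Tp sref_Tp_num evalpr_cRef_cReal)

lemma rrax_sound: "rrax lt S g A \<Longrightarrow> inL lt g A \<Longrightarrow> pole kT P \<Longrightarrow> holds_in g P e A"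
  unfolding rrax_def
  by (auto intro: RR1_sound RR2_sound RR3_sound RR4_sound RR5_sound RR6_sound RR7_sound RR8_sound
      RR9_sound RR10_sound)

lemma reflection_sound:
  assumes "holds_in g {} e (Tp b t (num (fcode A)))" "sentL A" "lt b g"
  shows "holds P Fr Tr e A"
proof -
  have "sentlt lt b A"
    using assms(2) idx_pureL by (auto simp: sentL_def sentlt_def inL_def)
  then have "evt e t \<in> sreal lt S g {} A"
    using assms(1,3) by (simp add: mem_TT_fcode)
  then have "sref lt S g {} A = {}"
    by (auto simp: sreal_def split: if_splits)
  then show ?thesis
    using sref_empty_pole_iff_holds[OF assms(2)] by blast
qed

lemma rrprov_sound: "rrprov lt S g A \<Longrightarrow> pole kT P \<Longrightarrow> holds_in g P e A"
proof (induction arbitrary: P e rule: rrprov.induct)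
  case (ax A)
  then show ?case
    using logax_sound paax_sound rrax_sound by blast
next
  case (reflrule b t A)
  have "pole kT {}"
    by (simp add: pole_def)
  then show ?case
    using reflrule reflection_sound by blast
qed auto

end

theorem proposition6:
  fixes lt :: "nat \<Rightarrow> nat \<Rightarrow> bool" and kT :: "nat \<Rightarrow> nat \<Rightarrow> nat \<Rightarrow> bool"
    and S :: rsyms and g :: nat and A :: fm and P :: "nat set"
  assumes "wf {(x, y). lt x y}" and "transp lt"
    and "good_syms lt kT S"
    and "sentlt lt g A"
    and "rrprov lt S g A"
    and "pole kT P"
  shows "models lt S g P A"
proof -
  \<comment> \<open>Derivable formulas hold under every assignment.\<close>
  have "holds P (FF lt S g P) (TT lt S g P) e A" for e
    using rrprov_sound[OF assms(1-3) assms(5,6)] .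
  then show ?thesis
    unfolding models_def by blast
qed

end
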